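(* Let $\epsilon\in(0,1)$ and let $h>0$ be arbitrary. Then there exists an initial value $u_0\in\mathbb{R}$ such that the sequence $(u_n)_{n\ge 0}$ generated by the explicit Euler scheme $$\frac{u_n-u_{n-1}}{h}+\frac{1}{\epsilon^2}\big(u_{n-1}^3-u_{n-1}\big)=0,\qquad n\ge 1,$$ converges to an incorrect steady state, i.e. $\lim_{n\to\infty}u_n$ exists and $\lim_{n\to\infty}u_n\neq \mathrm{sign}(u_0)$.
   Context: The scheme discretizes the ODE $u'(t)+\frac{1}{\epsilon^2}(u^3-u)=0$, $u(0)=u_0$, whose exact solution converges to $\mathrm{sign}(u_0)\in\{-1,0,1\}$ as $t\to\infty$ (with $\mathrm{sign}(0)=0$). A numerical solution is said to converge to the correct steady state if $\lim_{n\to\infty}u_n=\mathrm{sign}(u_0)$. *)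

theory Defs
  imports Complex_Main
begin

fun euler_seq :: "real \<Rightarrow> real \<Rightarrow> real \<Rightarrow> nat \<Rightarrow> real" where
  "euler_seq eps h u0 0 = u0"
| "euler_seq eps h u0 (Suc n) =
     euler_seq eps h u0 n - h / eps^2 * ((euler_seq eps h u0 n)^3 - euler_seq eps h u0 n)"

end

theory Submission
  imports Defs
begin

text \<open>The explicit Euler step sends u to u (1 + k - k u^2) with k = h / eps^2, so besides the
  fixed point 0 it also maps the positive number sqrt (1 + 1/k) to 0. Started there, the
  scheme reaches 0 after one step and stays there, whereas the correct steady state is 1.
  This works for every h > 0 and eps \<noteq> 0.\<close>

lemma euler_seq_Suc_shift:
  "euler_seq eps h u0 (Suc n) = euler_seq eps h (euler_seq eps h u0 1) n"
  by (induction n) simp_all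

lemma euler_seq_from_zero: "euler_seq eps h 0 n = 0"
  by (induction n) simp_all

lemma euler_seq_tendsto_zero_if_step_zero:
  assumes "euler_seq eps h u0 1 = 0"
  shows "euler_seq eps h u0 \<longlonglongrightarrow> 0"
proof -
  have "(\<lambda>n. euler_seq eps h u0 (Suc n)) = (\<lambda>n. 0)"
    using assms by (metis euler_seq_Suc_shift euler_seq_from_zero)
  then show ?thesis
    by (metis LIMSEQ_imp_Suc tendsto_const)
qed

lemma euler_step_spurious_root:
  fixes eps h :: real
  assumes "eps \<noteq> 0" and "0 < h"
  shows "euler_seq eps h (sqrt (1 + eps\<^sup>2 / h)) 1 = 0"
proof -
  define k where "k = h / eps\<^sup>2"
  define a where "a = sqrt (1 + eps\<^sup>2 / h)"
  have "k * a\<^sup>2 = 1 + k"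
    using assms by (simp add: a_def k_def add_pos_pos field_simps)
  have "euler_seq eps h a 1 = a * (1 + k - k * a\<^sup>2)"
    by (simp add: k_def algebra_simps power3_eq_cube power2_eq_square)
  also have "\<dots> = 0" using \<open>k * a\<^sup>2 = 1 + k\<close> by simp
  finally show ?thesis by (simp add: a_def)
qed

theorem lemma2p1:
  fixes eps h :: real
  assumes "0 < eps" and "eps < 1" and "0 < h"
  shows "\<exists>u0 :: real. \<exists>L :: real.
           euler_seq eps h u0 \<longlonglongrightarrow> L \<and> L \<noteq> sgn u0"
proof -
  define u0 where "u0 = sqrt (1 + eps\<^sup>2 / h)"
  have "euler_seq eps h u0 \<longlonglongrightarrow> 0"
    using assms euler_step_spurious_root[of eps h]
    by (simp add: u0_def euler_seq_tendsto_zero_if_step_zero)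
  moreover have "sgn u0 = 1"
    using assms by (simp add: u0_def add_pos_pos)
  ultimately show ?thesis by force
qed

end
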